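(* Let $\gamma,\sigma:[a,b]\to V$ be continuous paths of bounded variation in a finite-dimensional real inner product space $V$, fix $(s,t)\in[a,b]^2$, and define $f(x):=K^{x\gamma,\sigma}(s,t)=\sum_{k\ge0}x^k\langle S(\gamma)^k_{a,s},S(\sigma)^k_{a,t}\rangle_k$ for $x\in\mathbb{R}$, where $S(\gamma)^k_{a,s}=\int_{a<u_1<\cdots<u_k<s}d\gamma_{u_1}\cdots d\gamma_{u_k}$ and $\langle\cdot,\cdot\rangle_k$ is the Hilbert–Schmidt inner product on $V^{\otimes k}$. Then $f$ is infinitely differentiable and, for every $k\in\mathbb{N}$, \[ f^{(k)}(x)=\sum_{l=0}^{\infty}x^{l}\frac{(l+k)!}{l!}\left\langle S(\gamma)_{a,s}^{l+k},S(\sigma)_{a,t}^{l+k}\right\rangle_{l+k}. \] In particular, \[ \left|f^{(k)}(x)\right|\leq\frac{L_{s}(\gamma)^{k/2}L_{t}(\sigma)^{k/2}}{|x|^{k/2}}I_{k}\left(2\sqrt{|x|L_{s}(\gamma)L_{t}(\sigma)}\right), \] where $L_s(\gamma)$ is the length of the path segment $\gamma|_{[a,s]}$, $L_t(\sigma)$ that of $\sigma|_{[a,t]}$, and $I_k$ is the modified Bessel function of the first kind of order $k$.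
   Context: $K^{\gamma,\sigma}(s,t)=\sum_{k\ge0}\langle S(\gamma)^k_{a,s},S(\sigma)^k_{a,t}\rangle_k$ is the original signature kernel, and $x\gamma$ denotes the path $u\mapsto x\gamma_u$. *)

theory Defs
  imports "HOL-Analysis.Analysis"
begin

definition is_partition :: "real \<Rightarrow> real \<Rightarrow> real list \<Rightarrow> bool" where
  "is_partition a b ts \<longleftrightarrow> ts \<noteq> [] \<and> hd ts = a \<and> last ts = b \<and> sorted_wrt (<) ts"

definition is_tagged_partition :: "real \<Rightarrow> real \<Rightarrow> real list \<Rightarrow> real list \<Rightarrow> bool" where
  "is_tagged_partition a b ts xs \<longleftrightarrow> is_partition a b ts \<and> length ts = Suc (length xs) \<and>
     (\<forall>i<length xs. ts!i \<le> xs!i \<and> xs!i \<le> ts!(Suc i))"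

definition mesh_less :: "real list \<Rightarrow> real \<Rightarrow> bool" where
  "mesh_less ts d \<longleftrightarrow> (\<forall>i. Suc i < length ts \<longrightarrow> ts!(Suc i) - ts!i < d)"

definition variation_sums :: "(real \<Rightarrow> 'a::real_normed_vector) \<Rightarrow> real \<Rightarrow> real \<Rightarrow> real set" where
  "variation_sums g a b =
     (\<lambda>ts. \<Sum>i<length ts - 1. norm (g (ts!(Suc i)) - g (ts!i))) ` {ts. is_partition a b ts}"

definition has_bounded_variation_on :: "(real \<Rightarrow> 'a::real_normed_vector) \<Rightarrow> real \<Rightarrow> real \<Rightarrow> bool" where
  "has_bounded_variation_on g a b \<longleftrightarrow> bdd_above (variation_sums g a b)"

definition path_length :: "(real \<Rightarrow> 'a::real_normed_vector) \<Rightarrow> real \<Rightarrow> real \<Rightarrow> real" where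
  "path_length g a b = Sup (variation_sums g a b)"

definition has_RS_integral :: "(real \<Rightarrow> real) \<Rightarrow> (real \<Rightarrow> real) \<Rightarrow> real \<Rightarrow> real \<Rightarrow> real \<Rightarrow> bool" where
  "has_RS_integral f h a b I \<longleftrightarrow>
     (\<forall>e>0. \<exists>d>0. \<forall>ts xs. is_tagged_partition a b ts xs \<and> mesh_less ts d \<longrightarrow>
        \<bar>(\<Sum>i<length xs. f (xs!i) * (h (ts!(Suc i)) - h (ts!i))) - I\<bar> < e)"

definition RS_integral :: "(real \<Rightarrow> real) \<Rightarrow> (real \<Rightarrow> real) \<Rightarrow> real \<Rightarrow> real \<Rightarrow> real" where
  "RS_integral f h a b = (THE I. has_RS_integral f h a b I)"

text \<open>sig_rev g a w t is the coordinate of S(g)^k_{a,t} at the basis word rev w: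
  S(g)^{k+1}_{a,t}(e_1..e_k e) = \<integral>_a^t S(g)^k_{a,u}(e_1..e_k) d<g_u,e>.\<close>
fun sig_rev :: "(real \<Rightarrow> 'a::euclidean_space) \<Rightarrow> real \<Rightarrow> 'a list \<Rightarrow> real \<Rightarrow> real" where
  "sig_rev g a [] t = 1"
| "sig_rev g a (e # w) t = RS_integral (\<lambda>u. sig_rev g a w u) (\<lambda>u. g u \<bullet> e) a t"

definition sig_coord :: "(real \<Rightarrow> 'a::euclidean_space) \<Rightarrow> real \<Rightarrow> 'a list \<Rightarrow> real \<Rightarrow> real" where
  "sig_coord g a w t = sig_rev g a (rev w) t"

text \<open>Hilbert--Schmidt inner product <S(g)^k_{a,s}, S(h)^k_{a,t}>_k on V^{\<otimes>k},
  written out in the orthonormal basis of V^{\<otimes>k} induced by Basis.\<close>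
definition sig_inner :: "(real \<Rightarrow> 'a::euclidean_space) \<Rightarrow> (real \<Rightarrow> 'a) \<Rightarrow> real \<Rightarrow> real \<Rightarrow> real \<Rightarrow> nat \<Rightarrow> real" where
  "sig_inner g h a s t k =
     (\<Sum>w\<in>{w. set w \<subseteq> Basis \<and> length w = k}. sig_coord g a w s * sig_coord h a w t)"

definition besselI :: "nat \<Rightarrow> real \<Rightarrow> real" where
  "besselI k z = (\<Sum>m. (z / 2) ^ (2 * m + k) / (fact m * fact (m + k)))"

end

theory Submission
  imports Defs
begin

text \<open>The coefficients \<open>c\<^sub>n = \<langle>S(\<gamma>)\<^sup>n\<^bsub>a,s\<^esub>, S(\<sigma>)\<^sup>n\<^bsub>a,t\<^esub>\<rangle>\<close> decay like
  \<open>(L\<^sub>s(\<gamma>) L\<^sub>t(\<sigma>))\<^sup>n / (n!)\<^sup>2\<close>. By Cauchy--Schwarz it suffices that the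
  Hilbert--Schmidt norm of \<open>S(g)\<^sup>n\<^bsub>a,t\<^esub>\<close> is at most \<open>L\<^sub>t(g)\<^sup>n / n!\<close>, which follows by
  induction on n: the next level is a Riemann--Stieltjes integral of the current one against the
  coordinates of g, and on each left Riemann--Stieltjes sum the bound telescopes. These integrals
  exist because every coordinate of a path of bounded variation has its increments dominated by the
  nondecreasing length function. Consequently f is an entire power series, it may be differentiated
  termwise, and bounding the differentiated series termwise gives exactly the power series of the
  modified Bessel function \<open>I\<^sub>k\<close>.\<close>

fun sum_adj :: "('a \<Rightarrow> 'a \<Rightarrow> 'b::comm_monoid_add) \<Rightarrow> 'a list \<Rightarrow> 'b" where
  "sum_adj F (x # y # zs) = F x y + sum_adj F (y # zs)"
| "sum_adj F _ = 0"

lemma sum_adj_conv_sum_nth: "sum_adj F xs = (\<Sum>i<length xs - 1. F (xs!i) (xs!Suc i))"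
  by (induction F xs rule: sum_adj.induct)
    (simp_all add: sum.lessThan_Suc_shift del: sum.lessThan_Suc)

lemma sum_adj_mono:
  fixes F G :: "'a \<Rightarrow> 'a \<Rightarrow> 'b::ordered_comm_monoid_add"
  shows "successively (\<lambda>u v. F u v \<le> G u v) xs \<Longrightarrow> sum_adj F xs \<le> sum_adj G xs"
  by (induction F xs rule: sum_adj.induct) (auto intro: add_mono)

lemma abs_sum_adj_le:
  fixes F :: "'a \<Rightarrow> 'a \<Rightarrow> 'b::ordered_ab_group_add_abs"
  shows "\<bar>sum_adj F xs\<bar> \<le> sum_adj (\<lambda>u v. \<bar>F u v\<bar>) xs"
  by (induction F xs rule: sum_adj.induct) (auto intro: order_trans[OF abs_triangle_ineq] add_mono)

lemma sum_adj_diff: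
  fixes F G :: "'a \<Rightarrow> 'a \<Rightarrow> 'b::ab_group_add"
  shows "sum_adj (\<lambda>u v. F u v - G u v) xs = sum_adj F xs - sum_adj G xs"
  by (induction F xs rule: sum_adj.induct) auto

lemma sum_adj_mult_left:
  fixes F :: "'a \<Rightarrow> 'a \<Rightarrow> 'b::semiring_0"
  shows "sum_adj (\<lambda>u v. c * F u v) xs = c * sum_adj F xs"
  by (induction F xs rule: sum_adj.induct) (auto simp: distrib_left)

lemma sum_adj_telescope:
  fixes \<phi> :: "'a \<Rightarrow> 'b::ab_group_add"
  shows "xs \<noteq> [] \<Longrightarrow> sum_adj (\<lambda>u v. \<phi> v - \<phi> u) xs = \<phi> (last xs) - \<phi> (hd xs)"
  by (induction "\<lambda>u v. \<phi> v - \<phi> u" xs rule: sum_adj.induct) auto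

lemma sum_adj_append: "sum_adj F (xs @ [y]) + sum_adj F (y # ys) = sum_adj F (xs @ y # ys)"
  by (induction xs rule: induct_list012) (simp_all add: add.assoc)

lemma L2_set_sum_adj_le:
  "L2_set (\<lambda>j. sum_adj (F j) xs) A \<le> sum_adj (\<lambda>u v. L2_set (\<lambda>j. F j u v) A) xs"
proof (induction xs rule: induct_list012)
  case (3 x y zs)
  have "L2_set (\<lambda>j. sum_adj (F j) (x # y # zs)) A
      \<le> L2_set (\<lambda>j. F j x y) A + L2_set (\<lambda>j. sum_adj (F j) (y # zs)) A"
    unfolding sum_adj.simps by (rule L2_set_triangle_ineq)
  with 3(2) show ?case by simp
qed (simp_all add: L2_set_def)

lemma sorted_wrt_less_hd_less_last:
  fixes xs :: "'a::order list"
  shows "sorted_wrt (<) xs \<Longrightarrow> 2 \<le> length xs \<Longrightarrow> hd xs < last xs"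
  by (induction xs rule: induct_list012) (auto simp: Suc_le_eq)

lemma sorted_wrt_less_hd_le_last:
  fixes xs :: "'a::order list"
  shows "sorted_wrt (<) xs \<Longrightarrow> u \<in> set xs \<Longrightarrow> hd xs \<le> u \<and> u \<le> last xs"
  by (induction xs rule: induct_list012) (auto, meson last_in_set less_imp_le)

lemma is_partition_bounds: "is_partition a b ts \<Longrightarrow> u \<in> set ts \<Longrightarrow> a \<le> u \<and> u \<le> b"
  unfolding is_partition_def using sorted_wrt_less_hd_le_last by blast

lemma is_partition_same_ends: "is_partition a a ts \<longleftrightarrow> ts = [a]"
proof
  assume p: "is_partition a a ts"
  then have "\<not> 2 \<le> length ts"
    using sorted_wrt_less_hd_less_last unfolding is_partition_def by fastforce
  with p show "ts = [a]"
    unfolding is_partition_def by (cases ts) (auto simp: Suc_le_eq)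
qed (simp add: is_partition_def)

lemma is_partition_two: "x < y \<Longrightarrow> is_partition x y [x, y]"
  by (simp add: is_partition_def)

lemma exists_partition: "a \<le> b \<Longrightarrow> \<exists>ts. is_partition a b ts"
  using is_partition_two[of a b] is_partition_same_ends[of a] by (cases "a = b") auto

lemma mesh_less_iff_successively: "mesh_less ts d \<longleftrightarrow> successively (\<lambda>u v. v - u < d) ts"
  by (simp add: mesh_less_def successively_conv_nth)

lemma mesh_less_mono: "mesh_less ts d \<Longrightarrow> d \<le> d' \<Longrightarrow> mesh_less ts d'"
  unfolding mesh_less_def by force

lemma is_partition_snoc_cons:
  assumes "is_partition a b ts"
  shows "butlast ts @ [b] = ts" "a # tl ts = ts"
  using assms unfolding is_partition_def by (metis append_butlast_last_id list.collapse)+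

lemma mesh_less_if_length_less:
  assumes "is_partition a b ts" "b - a < d"
  shows "mesh_less ts d"
  unfolding mesh_less_def
proof (intro allI impI)
  fix i assume "Suc i < length ts"
  then have "a \<le> ts!i" "ts!Suc i \<le> b"
    using is_partition_bounds[OF assms(1)] by (auto intro: nth_mem)
  then show "ts!Suc i - ts!i < d" using assms(2) by linarith
qed

lemma exists_partition_mesh_less:
  fixes d :: real
  assumes "d > 0" "a \<le> b"
  shows "\<exists>ts. is_partition a b ts \<and> mesh_less ts d"
proof -
  obtain n :: nat where "b - a < n * (d/2)"
    using reals_Archimedean3[OF half_gt_zero[OF assms(1)]] by blast
  then show ?thesis
    using \<open>a \<le> b\<close>
  proof (induction n arbitrary: a)
    case (Suc n)
    show ?case
    proof (cases "b - a < d")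
      case True
      then show ?thesis using exists_partition[OF Suc.prems(2)] mesh_less_if_length_less by blast
    next
      case False
      define c where "c = a + d/2"
      have "c \<le> b" "b - c < n * (d/2)" "a < c"
        using False Suc.prems assms(1) by (auto simp: c_def algebra_simps)
      then obtain ss where ss: "is_partition c b ss" "mesh_less ss d"
        using Suc.IH by blast
      have "\<forall>u\<in>set ss. a < u"
        using is_partition_bounds[OF ss(1)] \<open>a < c\<close> by force
      then have "is_partition a b (a # ss)"
        using ss(1) by (simp add: is_partition_def)
      moreover have "mesh_less (a # ss) d"
      proof -
        have "c # tl ss = ss" by (rule is_partition_snoc_cons(2)[OF ss(1)])
        moreover have "c - a < d" using assms(1) by (simp add: c_def)
        ultimately show ?thesis
          using ss(2) unfolding mesh_less_iff_successively by (metis successively.simps(3))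
      qed
      ultimately show ?thesis by blast
    qed
  qed simp
qed

lemma is_partition_append:
  assumes ts: "is_partition a x ts" and ss: "is_partition x y ss"
  shows "is_partition a y (butlast ts @ ss)"
proof -
  have "sorted_wrt (<) (butlast ts @ [x])"
    using ts unfolding is_partition_snoc_cons(1)[OF ts] is_partition_def by simp
  then have A: "sorted_wrt (<) (butlast ts)" "\<forall>u\<in>set (butlast ts). u < x"
    by (simp_all add: sorted_wrt_append)
  have B: "sorted_wrt (<) ss" "\<forall>v\<in>set ss. x \<le> v"
    using ss is_partition_bounds[OF ss] unfolding is_partition_def by simp_all
  have "\<forall>u\<in>set (butlast ts). \<forall>v\<in>set ss. u < v"
    using A(2) B(2) by (meson less_le_trans)
  then have "sorted_wrt (<) (butlast ts @ ss)"
    using A(1) B(1) by (simp add: sorted_wrt_append)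
  moreover have "hd (butlast ts @ ss) = a"
  proof (cases "butlast ts = []")
    case True
    then have "ts = [x]" using is_partition_snoc_cons(1)[OF ts] by simp
    then show ?thesis using True ts ss unfolding is_partition_def by simp
  next
    case False
    then have "hd (butlast ts) = hd ts" by (metis hd_append2 is_partition_snoc_cons(1)[OF ts])
    then show ?thesis using False ts unfolding is_partition_def by simp
  qed
  ultimately show ?thesis
    using ss unfolding is_partition_def by simp
qed

lemma mesh_less_append:
  assumes "is_partition a x ts" "is_partition x y ss" "mesh_less ts d" "mesh_less ss d"
  shows "mesh_less (butlast ts @ ss) d"
proof -
  let ?P = "\<lambda>u v. v - u < d"
  have "successively ?P (butlast ts @ [x])" "successively ?P (x # tl ss)"
    using assms(3,4) is_partition_snoc_cons[OF assms(1)] is_partition_snoc_cons[OF assms(2)]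
    unfolding mesh_less_iff_successively by metis+
  then have "successively ?P (butlast ts @ x # tl ss)"
    by (simp add: successively_append_iff)
  then show ?thesis
    using is_partition_snoc_cons[OF assms(2)] unfolding mesh_less_iff_successively by metis
qed

lemma is_partition_union:
  assumes "is_partition a b ts" "is_partition a b ss"
  shows "is_partition a b (sorted_list_of_set (set ts \<union> set ss))"
proof -
  let ?rs = "sorted_list_of_set (set ts \<union> set ss)"
  have s: "sorted_wrt (<) ?rs" by simp
  have ab: "a \<in> set ?rs" "b \<in> set ?rs"
    using assms unfolding is_partition_def by (auto simp: hd_in_set last_in_set)
  then have ne: "?rs \<noteq> []" by auto
  have "hd ?rs \<in> set ts \<union> set ss" "last ?rs \<in> set ts \<union> set ss"
    using hd_in_set[OF ne] last_in_set[OF ne] by auto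
  then have "a \<le> hd ?rs" "last ?rs \<le> b"
    using is_partition_bounds[OF assms(1)] is_partition_bounds[OF assms(2)] by blast+
  moreover have "hd ?rs \<le> a" "b \<le> last ?rs"
    using sorted_wrt_less_hd_le_last[OF s] ab by auto
  ultimately show ?thesis using s ne unfolding is_partition_def by auto
qed

section \<open>Riemann--Stieltjes integrals against a controlled integrator\<close>

definition riemann_sum :: "(real \<Rightarrow> real) \<Rightarrow> (real \<Rightarrow> real) \<Rightarrow> real list \<Rightarrow> real list \<Rightarrow> real" where
  "riemann_sum f h ts xs = (\<Sum>i<length xs. f (xs!i) * (h (ts!Suc i) - h (ts!i)))"

definition left_sum :: "(real \<Rightarrow> real) \<Rightarrow> (real \<Rightarrow> real) \<Rightarrow> real list \<Rightarrow> real" where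
  "left_sum f h ts = sum_adj (\<lambda>u v. f u * (h v - h u)) ts"

lemma has_RS_integral_iff_riemann_sum:
  "has_RS_integral f h a b I \<longleftrightarrow> (\<forall>e>0. \<exists>d>0. \<forall>ts xs.
     is_tagged_partition a b ts xs \<and> mesh_less ts d \<longrightarrow> \<bar>riemann_sum f h ts xs - I\<bar> < e)"
  by (simp add: has_RS_integral_def riemann_sum_def)

lemma left_sum_append:
  assumes "is_partition a x ts" "is_partition x y ss"
  shows "left_sum f h (butlast ts @ ss) = left_sum f h ts + left_sum f h ss"
  using sum_adj_append[of "\<lambda>u v. f u * (h v - h u)" "butlast ts" x "tl ss"]
  unfolding left_sum_def is_partition_snoc_cons(1)[OF assms(1)]
    is_partition_snoc_cons(2)[OF assms(2)]
  by simp

lemma is_tagged_partition_butlast: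
  assumes "is_partition a b ts"
  shows "is_tagged_partition a b ts (butlast ts)"
    and "riemann_sum f h ts (butlast ts) = left_sum f h ts"
proof -
  have "ts \<noteq> []" "\<forall>i. Suc i < length ts \<longrightarrow> ts!i < ts!Suc i"
    using assms by (simp_all add: is_partition_def sorted_wrt_iff_nth_Suc_transp)
  then show "is_tagged_partition a b ts (butlast ts)"
    using assms by (auto simp: is_tagged_partition_def nth_butlast less_imp_le less_diff_conv)
  show "riemann_sum f h ts (butlast ts) = left_sum f h ts"
    unfolding riemann_sum_def left_sum_def sum_adj_conv_sum_nth by (simp add: nth_butlast)
qed

definition controlled_by :: "(real \<Rightarrow> real) \<Rightarrow> (real \<Rightarrow> real) \<Rightarrow> real \<Rightarrow> real \<Rightarrow> bool" where
  "controlled_by h W a b \<longleftrightarrow> (\<forall>x y. a \<le> x \<longrightarrow> x \<le> y \<longrightarrow> y \<le> b \<longrightarrow> \<bar>h y - h x\<bar> \<le> W y - W x)"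

definition oscillation_le :: "(real \<Rightarrow> real) \<Rightarrow> real \<Rightarrow> real \<Rightarrow> real \<Rightarrow> real \<Rightarrow> bool" where
  "oscillation_le f a b \<delta> \<epsilon> \<longleftrightarrow> (\<forall>u\<in>{a..b}. \<forall>v\<in>{a..b}. \<bar>u - v\<bar> < \<delta> \<longrightarrow> \<bar>f u - f v\<bar> \<le> \<epsilon>)"

lemma controlled_by_subinterval:
  "controlled_by h W a b \<Longrightarrow> a \<le> a' \<Longrightarrow> b' \<le> b \<Longrightarrow> controlled_by h W a' b'"
  unfolding controlled_by_def by auto

lemma controlled_by_mono:
  assumes "controlled_by h W a b" "a \<le> x" "x \<le> y" "y \<le> b"
  shows "W x \<le> W y"
proof -
  have "\<bar>h y - h x\<bar> \<le> W y - W x"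
    using assms unfolding controlled_by_def by blast
  then show ?thesis using abs_ge_zero[of "h y - h x"] by linarith
qed

lemma exists_oscillation_le:
  assumes "continuous_on {a..b} f" "\<epsilon> > 0"
  shows "\<exists>\<delta>>0. oscillation_le f a b \<delta> \<epsilon>"
proof -
  have "uniformly_continuous_on {a..b} f"
    using assms(1) by (rule compact_uniformly_continuous) simp
  then obtain \<delta> where "\<delta> > 0" "\<forall>u\<in>{a..b}. \<forall>v\<in>{a..b}. dist v u < \<delta> \<longrightarrow> dist (f v) (f u) < \<epsilon>"
    unfolding uniformly_continuous_on_def using assms(2) by blast
  then have "oscillation_le f a b \<delta> \<epsilon>"
    unfolding oscillation_le_def dist_real_def by (simp add: abs_minus_commute less_imp_le)
  with \<open>\<delta> > 0\<close> show ?thesis by blast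
qed

lemma left_sum_close_to_one_step:
  assumes osc: "oscillation_le f a b \<delta> \<epsilon>" and ctl: "controlled_by h W a b"
    and rs: "sorted_wrt (<) rs" "rs \<noteq> []" "hd rs = x" "last rs = y"
    and xy: "a \<le> x" "y \<le> b" "y - x < \<delta>"
  shows "\<bar>left_sum f h rs - f x * (h y - h x)\<bar> \<le> \<epsilon> * (W y - W x)"
proof -
  have between: "x \<le> u \<and> u \<le> y" if "u \<in> set rs" for u
    using sorted_wrt_less_hd_le_last[OF rs(1) that] rs(3,4) by simp
  have "x \<le> y" using between[of x] hd_in_set[OF rs(2)] rs(3) by simp
  have step: "\<bar>f u * (h v - h u) - (f x * h v - f x * h u)\<bar> \<le> \<epsilon> * (W v - W u)"
    if "u \<in> set rs" "v \<in> set rs" "u < v" for u v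
  proof -
    have uv: "a \<le> u" "u \<le> v" "v \<le> b" "x \<le> u" "u - x < \<delta>"
      using between[OF that(1)] between[OF that(2)] that(3) xy by auto
    then have "\<bar>f u - f x\<bar> \<le> \<epsilon>"
      using osc \<open>x \<le> y\<close> xy unfolding oscillation_le_def by auto
    moreover have "\<bar>h v - h u\<bar> \<le> W v - W u"
      using ctl uv unfolding controlled_by_def by blast
    ultimately have "\<bar>f u - f x\<bar> * \<bar>h v - h u\<bar> \<le> \<epsilon> * (W v - W u)"
      by (intro mult_mono) auto
    moreover have "f u * (h v - h u) - (f x * h v - f x * h u) = (f u - f x) * (h v - h u)"
      by (simp add: algebra_simps)
    ultimately show ?thesis by (simp add: abs_mult)
  qed
  have "f x * (h y - h x) = sum_adj (\<lambda>u v. f x * h v - f x * h u) rs"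
    using sum_adj_telescope[OF rs(2), of "\<lambda>v. f x * h v"] rs by (simp add: algebra_simps)
  then have "\<bar>left_sum f h rs - f x * (h y - h x)\<bar>
      = \<bar>sum_adj (\<lambda>u v. f u * (h v - h u) - (f x * h v - f x * h u)) rs\<bar>"
    unfolding left_sum_def sum_adj_diff by simp
  also have "\<dots> \<le> sum_adj (\<lambda>u v. \<bar>f u * (h v - h u) - (f x * h v - f x * h u)\<bar>) rs"
    by (rule abs_sum_adj_le)
  also have "\<dots> \<le> sum_adj (\<lambda>u v. \<epsilon> * (W v - W u)) rs"
    by (rule sum_adj_mono, rule successively_mono[OF successively_if_sorted_wrt[OF rs(1)] step])
  also have "\<dots> = \<epsilon> * (W y - W x)"
    unfolding sum_adj_mult_left sum_adj_telescope[OF rs(2)] using rs by simp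
  finally show ?thesis .
qed

lemma left_sum_refine:
  assumes osc: "oscillation_le f a b \<delta> \<epsilon>" and ctl: "controlled_by h W a b"
  shows "sorted_wrt (<) ts \<Longrightarrow> sorted_wrt (<) rs \<Longrightarrow> ts \<noteq> [] \<Longrightarrow> set ts \<subseteq> set rs
    \<Longrightarrow> hd ts = hd rs \<Longrightarrow> last ts = last rs \<Longrightarrow> mesh_less ts \<delta> \<Longrightarrow> set rs \<subseteq> {a..b}
    \<Longrightarrow> \<bar>left_sum f h ts - left_sum f h rs\<bar> \<le> \<epsilon> * (W (last ts) - W (hd ts))"
proof (induction ts arbitrary: rs rule: induct_list012)
  case (2 x)
  then have "\<not> 2 \<le> length rs"
    using sorted_wrt_less_hd_less_last[OF 2(2)] by auto
  then have "rs = [x]"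
    using 2 by (cases rs) (auto simp: Suc_le_eq)
  then show ?case by (simp add: left_sum_def)
next
  case (3 x y zs)
  \<comment> \<open>split rs at y: the part up to y refines the single step [x, y], the rest refines y # zs\<close>
  obtain r1 r2 where rs: "rs = r1 @ y # r2"
    using 3(6) by (meson insert_subset list.set_intros(1) set_subset_Cons split_list subsetD)
  have "sorted_wrt (<) (r1 @ y # r2)" using 3(4) rs by simp
  then have r1: "\<forall>u\<in>set r1. u < y" "sorted_wrt (<) (r1 @ [y])" and r2: "sorted_wrt (<) (y # r2)"
    by (auto simp: sorted_wrt_append)
  have "x < y" "hd rs = x" using 3(3,7) by simp_all
  then have "r1 \<noteq> []" using rs by auto
  then have "hd r1 = x" using \<open>hd rs = x\<close> rs by simp
  have "set zs \<subseteq> set r2"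
  proof
    fix z assume "z \<in> set zs"
    then have "y < z" "z \<in> set rs" using 3(3,6) by auto
    then show "z \<in> set r2" using rs r1(1) by auto
  qed
  have "\<bar>left_sum f h (y # zs) - left_sum f h (y # r2)\<bar> \<le> \<epsilon> * (W (last (y # zs)) - W (hd (y # zs)))"
  proof (rule 3(2))
    show "sorted_wrt (<) (y # zs)" using 3(3) by simp
    show "set (y # zs) \<subseteq> set (y # r2)" using \<open>set zs \<subseteq> set r2\<close> by auto
    show "last (y # zs) = last (y # r2)" using 3(8) rs by simp
    show "mesh_less (y # zs) \<delta>" using 3(9) unfolding mesh_less_iff_successively by simp
    show "set (y # r2) \<subseteq> {a..b}" using 3(10) rs by auto
  qed (use r2 in auto)
  moreover have "\<bar>left_sum f h (r1 @ [y]) - f x * (h y - h x)\<bar> \<le> \<epsilon> * (W y - W x)"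
    using 3(6,9,10) \<open>r1 \<noteq> []\<close> \<open>hd r1 = x\<close>
    by (intro left_sum_close_to_one_step[OF osc ctl r1(2)]) (auto simp: mesh_less_iff_successively)
  moreover have "left_sum f h rs = left_sum f h (r1 @ [y]) + left_sum f h (y # r2)"
    unfolding rs left_sum_def by (rule sum_adj_append[symmetric])
  ultimately show ?case
    by (simp add: left_sum_def algebra_simps)
qed simp

lemma riemann_sum_near_left_sum:
  assumes osc: "oscillation_le f a b \<delta> \<epsilon>" and ctl: "controlled_by h W a b" and "0 \<le> \<epsilon>"
    and tp: "is_tagged_partition a b ts xs" and mesh: "mesh_less ts \<delta>"
  shows "\<bar>riemann_sum f h ts xs - left_sum f h ts\<bar> \<le> \<epsilon> * (W b - W a)"
proof -
  have p: "is_partition a b ts" and len: "length ts = Suc (length xs)"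
    and tags: "\<And>i. i < length xs \<Longrightarrow> ts!i \<le> xs!i \<and> xs!i \<le> ts!Suc i"
    using tp unfolding is_tagged_partition_def by auto
  let ?n = "length xs"
  have "left_sum f h ts = (\<Sum>i<?n. f (ts!i) * (h (ts!Suc i) - h (ts!i)))"
    unfolding left_sum_def sum_adj_conv_sum_nth using len by simp
  then have "\<bar>riemann_sum f h ts xs - left_sum f h ts\<bar>
      = \<bar>\<Sum>i<?n. (f (xs!i) - f (ts!i)) * (h (ts!Suc i) - h (ts!i))\<bar>"
    unfolding riemann_sum_def by (simp add: sum_subtractf[symmetric] algebra_simps)
  also have "\<dots> \<le> (\<Sum>i<?n. \<bar>f (xs!i) - f (ts!i)\<bar> * \<bar>h (ts!Suc i) - h (ts!i)\<bar>)"
    unfolding abs_mult[symmetric] by (rule sum_abs)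
  also have "\<dots> \<le> (\<Sum>i<?n. \<epsilon> * (W (ts!Suc i) - W (ts!i)))"
  proof (rule sum_mono)
    fix i assume "i \<in> {..<?n}"
    then have i: "i < ?n" by simp
    have ab: "ts!i \<in> {a..b}" "ts!Suc i \<in> {a..b}"
      using is_partition_bounds[OF p] i len by (auto intro!: nth_mem)
    moreover have "ts!Suc i - ts!i < \<delta>" using mesh i len unfolding mesh_less_def by simp
    ultimately have "\<bar>f (xs!i) - f (ts!i)\<bar> \<le> \<epsilon>"
      using osc tags[OF i] unfolding oscillation_le_def by auto
    moreover have "\<bar>h (ts!Suc i) - h (ts!i)\<bar> \<le> W (ts!Suc i) - W (ts!i)"
      using ctl ab tags[OF i] unfolding controlled_by_def by auto
    ultimately show "\<bar>f (xs!i) - f (ts!i)\<bar> * \<bar>h (ts!Suc i) - h (ts!i)\<bar>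
        \<le> \<epsilon> * (W (ts!Suc i) - W (ts!i))"
      using \<open>0 \<le> \<epsilon>\<close> by (intro mult_mono) auto
  qed
  also have "\<dots> = \<epsilon> * (W b - W a)"
    using sum_adj_telescope[of ts W] p len
    unfolding sum_distrib_left[symmetric] sum_adj_conv_sum_nth is_partition_def by simp
  finally show ?thesis .
qed

lemma riemann_sum_near_any_left_sum:
  assumes osc: "oscillation_le f a b \<delta> \<epsilon>" and ctl: "controlled_by h W a b" and "0 \<le> \<epsilon>"
    and tp: "is_tagged_partition a b ts xs" "mesh_less ts \<delta>"
    and ss: "is_partition a b ss" "mesh_less ss \<delta>"
  shows "\<bar>riemann_sum f h ts xs - left_sum f h ss\<bar> \<le> 3 * \<epsilon> * (W b - W a)"
proof -
  \<comment> \<open>compare both left sums with that of the common refinement\<close>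
  have ts: "is_partition a b ts" using tp unfolding is_tagged_partition_def by auto
  let ?rs = "sorted_list_of_set (set ts \<union> set ss)"
  have rs: "is_partition a b ?rs" by (rule is_partition_union[OF ts ss(1)])
  have "set ?rs \<subseteq> {a..b}" using is_partition_bounds[OF rs] by auto
  then have "\<bar>left_sum f h ts - left_sum f h ?rs\<bar> \<le> \<epsilon> * (W b - W a)"
    "\<bar>left_sum f h ss - left_sum f h ?rs\<bar> \<le> \<epsilon> * (W b - W a)"
    using left_sum_refine[OF osc ctl, of ts ?rs] left_sum_refine[OF osc ctl, of ss ?rs]
      ts ss rs tp(2) unfolding is_partition_def by auto
  then show ?thesis
    using riemann_sum_near_left_sum[OF osc ctl \<open>0 \<le> \<epsilon>\<close> tp] by linarith
qed

lemma riemann_sums_cauchy: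
  assumes "a \<le> b" "continuous_on {a..b} f" "controlled_by h W a b" "e > 0"
  shows "\<exists>d>0. \<forall>ts xs ss. is_tagged_partition a b ts xs \<and> mesh_less ts d
    \<and> is_partition a b ss \<and> mesh_less ss d \<longrightarrow> \<bar>riemann_sum f h ts xs - left_sum f h ss\<bar> < e"
proof -
  define D where "D = W b - W a"
  have "0 \<le> D"
    using controlled_by_mono[OF assms(3) order.refl assms(1) order.refl] by (simp add: D_def)
  define \<epsilon> where "\<epsilon> = e / (3 * (D + 1))"
  have "\<epsilon> > 0" "3 * \<epsilon> * D < e"
    using \<open>0 \<le> D\<close> \<open>e > 0\<close> by (simp_all add: \<epsilon>_def field_simps)
  obtain \<delta> where "\<delta> > 0" and osc: "oscillation_le f a b \<delta> \<epsilon>"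
    using exists_oscillation_le[OF assms(2) \<open>\<epsilon> > 0\<close>] by blast
  show ?thesis
  proof (intro exI[of _ \<delta>] conjI allI impI)
    fix ts xs ss
    assume "is_tagged_partition a b ts xs \<and> mesh_less ts \<delta> \<and> is_partition a b ss \<and> mesh_less ss \<delta>"
    then have "\<bar>riemann_sum f h ts xs - left_sum f h ss\<bar> \<le> 3 * \<epsilon> * D"
      using riemann_sum_near_any_left_sum[OF osc assms(3)] \<open>\<epsilon> > 0\<close> unfolding D_def by auto
    with \<open>3 * \<epsilon> * D < e\<close> show "\<bar>riemann_sum f h ts xs - left_sum f h ss\<bar> < e" by linarith
  qed (rule \<open>\<delta> > 0\<close>)
qed

lemma exists_partitions_mesh_tendsto_0:
  assumes "a \<le> b"
  obtains P :: "nat \<Rightarrow> real list"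
    where "\<And>n. is_partition a b (P n)" "\<And>d. d > 0 \<Longrightarrow> \<exists>N. \<forall>n\<ge>N. mesh_less (P n) d"
proof -
  have "\<forall>n. \<exists>ts. is_partition a b ts \<and> mesh_less ts (1 / Suc n)"
    using exists_partition_mesh_less[OF _ assms] by simp
  then obtain P where P: "\<And>n. is_partition a b (P n)" "\<And>n. mesh_less (P n) (1 / Suc n)"
    by metis
  have fine: "\<exists>N. \<forall>n\<ge>N. mesh_less (P n) d" if "d > 0" for d
  proof -
    obtain N where N: "inverse (Suc N) < d" using reals_Archimedean[OF \<open>d > 0\<close>] by blast
    have "1 / Suc n \<le> d" if "n \<ge> N" for n
    proof -
      have "1 / Suc n \<le> 1 / Suc N" using that by (simp add: frac_le)
      then show ?thesis using N by (simp add: inverse_eq_divide)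
    qed
    then show ?thesis using P(2) mesh_less_mono by blast
  qed
  show thesis using P(1) fine by (rule that)
qed

lemma Cauchy_left_sums:
  assumes P: "\<And>n. is_partition a b (P n)" and fine: "\<And>d. d > 0 \<Longrightarrow> \<exists>N. \<forall>n\<ge>N. mesh_less (P n) d"
    and cauchy: "\<And>e. e > 0 \<Longrightarrow> \<exists>d>0. \<forall>ts xs ss. is_tagged_partition a b ts xs \<and> mesh_less ts d
      \<and> is_partition a b ss \<and> mesh_less ss d \<longrightarrow> \<bar>riemann_sum f h ts xs - left_sum f h ss\<bar> < e"
  shows "Cauchy (\<lambda>n. left_sum f h (P n))"
proof (rule metric_CauchyI)
  fix e :: real assume "e > 0"
  then obtain d where "d > 0" and d: "\<forall>ts xs ss. is_tagged_partition a b ts xs \<and> mesh_less ts d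
      \<and> is_partition a b ss \<and> mesh_less ss d \<longrightarrow> \<bar>riemann_sum f h ts xs - left_sum f h ss\<bar> < e"
    using cauchy by blast
  obtain N where "\<forall>n\<ge>N. mesh_less (P n) d" using fine[OF \<open>d > 0\<close>] by blast
  then have "dist (left_sum f h (P m)) (left_sum f h (P n)) < e" if "m \<ge> N" "n \<ge> N" for m n
    using d that P is_tagged_partition_butlast[OF P] unfolding dist_real_def by metis
  then show "\<exists>M. \<forall>m\<ge>M. \<forall>n\<ge>M. dist (left_sum f h (P m)) (left_sum f h (P n)) < e" by blast
qed

lemma has_RS_integral_lim_left_sums:
  assumes P: "\<And>n. is_partition a b (P n)" and fine: "\<And>d. d > 0 \<Longrightarrow> \<exists>N. \<forall>n\<ge>N. mesh_less (P n) d"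
    and cauchy: "\<And>e. e > 0 \<Longrightarrow> \<exists>d>0. \<forall>ts xs ss. is_tagged_partition a b ts xs \<and> mesh_less ts d
      \<and> is_partition a b ss \<and> mesh_less ss d \<longrightarrow> \<bar>riemann_sum f h ts xs - left_sum f h ss\<bar> < e"
    and I: "(\<lambda>n. left_sum f h (P n)) \<longlonglongrightarrow> I"
  shows "has_RS_integral f h a b I"
  unfolding has_RS_integral_iff_riemann_sum
proof (intro allI impI)
  fix e :: real assume "e > 0"
  then have "e / 2 > 0" by simp
  then obtain d where "d > 0" and d: "\<forall>ts xs ss. is_tagged_partition a b ts xs \<and> mesh_less ts d
      \<and> is_partition a b ss \<and> mesh_less ss d \<longrightarrow> \<bar>riemann_sum f h ts xs - left_sum f h ss\<bar> < e / 2"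
    using cauchy by blast
  obtain N where N: "\<forall>n\<ge>N. mesh_less (P n) d" using fine[OF \<open>d > 0\<close>] by blast
  show "\<exists>d>0. \<forall>ts xs. is_tagged_partition a b ts xs \<and> mesh_less ts d \<longrightarrow>
      \<bar>riemann_sum f h ts xs - I\<bar> < e"
  proof (intro exI[of _ d] conjI allI impI)
    fix ts xs assume tx: "is_tagged_partition a b ts xs \<and> mesh_less ts d"
    have close: "\<bar>riemann_sum f h ts xs - left_sum f h (P n)\<bar> < e / 2" if "n \<ge> N" for n
      using d tx N that P[of n] by blast
    have "(\<lambda>n. \<bar>riemann_sum f h ts xs - left_sum f h (P n)\<bar>) \<longlonglongrightarrow> \<bar>riemann_sum f h ts xs - I\<bar>"
      by (intro tendsto_intros I)
    then have "\<bar>riemann_sum f h ts xs - I\<bar> \<le> e / 2"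
      by (rule LIMSEQ_le_const2) (meson close less_imp_le)
    then show "\<bar>riemann_sum f h ts xs - I\<bar> < e" using \<open>e > 0\<close> by simp
  qed (rule \<open>d > 0\<close>)
qed

lemma has_RS_integral_exists:
  assumes ab: "a \<le> b" and fc: "continuous_on {a..b} f" and ctl: "controlled_by h W a b"
  shows "\<exists>I. has_RS_integral f h a b I"
proof -
  obtain P :: "nat \<Rightarrow> real list"
    where P: "\<And>n. is_partition a b (P n)" and fine: "\<And>d. d > 0 \<Longrightarrow> \<exists>N. \<forall>n\<ge>N. mesh_less (P n) d"
    using exists_partitions_mesh_tendsto_0[OF ab] by blast
  note cauchy = riemann_sums_cauchy[OF ab fc ctl]
  obtain I where "(\<lambda>n. left_sum f h (P n)) \<longlonglongrightarrow> I"
    using Cauchy_left_sums[OF P fine cauchy] Cauchy_convergent_iff convergent_def by blast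
  then show ?thesis using has_RS_integral_lim_left_sums[OF P fine cauchy] by blast
qed

lemma has_RS_integral_unique:
  assumes "a \<le> b" "has_RS_integral f h a b I" "has_RS_integral f h a b J"
  shows "I = J"
proof (rule ccontr)
  assume "I \<noteq> J"
  then have e: "\<bar>I - J\<bar> / 2 > 0" by simp
  obtain d1 where "d1 > 0" and d1: "\<forall>ts xs. is_tagged_partition a b ts xs \<and> mesh_less ts d1 \<longrightarrow>
      \<bar>riemann_sum f h ts xs - I\<bar> < \<bar>I - J\<bar> / 2"
    using assms(2) e unfolding has_RS_integral_iff_riemann_sum by blast
  obtain d2 where "d2 > 0" and d2: "\<forall>ts xs. is_tagged_partition a b ts xs \<and> mesh_less ts d2 \<longrightarrow>
      \<bar>riemann_sum f h ts xs - J\<bar> < \<bar>I - J\<bar> / 2"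
    using assms(3) e unfolding has_RS_integral_iff_riemann_sum by blast
  obtain ts where ts: "is_partition a b ts" "mesh_less ts (min d1 d2)"
    using exists_partition_mesh_less[OF _ assms(1), of "min d1 d2"] \<open>d1 > 0\<close> \<open>d2 > 0\<close> by auto
  then have "mesh_less ts d1" "mesh_less ts d2" using mesh_less_mono by fastforce+
  then have "\<bar>left_sum f h ts - I\<bar> < \<bar>I - J\<bar> / 2" "\<bar>left_sum f h ts - J\<bar> < \<bar>I - J\<bar> / 2"
    using d1 d2 is_tagged_partition_butlast[OF ts(1)] by metis+
  then show False by (simp add: abs_if split: if_splits)
qed

lemma RS_integral_eqI: "a \<le> b \<Longrightarrow> has_RS_integral f h a b I \<Longrightarrow> RS_integral f h a b = I"
  unfolding RS_integral_def using has_RS_integral_unique by blast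

lemma has_RS_integral_RS_integral:
  assumes "a \<le> t" "t \<le> b" "continuous_on {a..b} f" "controlled_by h W a b"
  shows "has_RS_integral f h a t (RS_integral f h a t)"
proof -
  have "continuous_on {a..t} f" by (rule continuous_on_subset[OF assms(3)]) (use assms(2) in auto)
  moreover have "controlled_by h W a t"
    using controlled_by_subinterval[OF assms(4)] assms(2) by auto
  ultimately obtain I where "has_RS_integral f h a t I"
    using has_RS_integral_exists[OF assms(1)] by blast
  then show ?thesis using RS_integral_eqI[OF assms(1)] by simp
qed

lemma RS_integral_increment:
  assumes fc: "continuous_on {a..b} f" and ctl: "controlled_by h W a b"
    and osc: "oscillation_le f a b \<delta> \<epsilon>" and xy: "a \<le> x" "x \<le> y" "y \<le> b" "y - x < \<delta>"
  shows "\<bar>RS_integral f h a y - RS_integral f h a x - f x * (h y - h x)\<bar> \<le> \<epsilon> * (W y - W x)"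
proof (rule field_le_epsilon)
  fix \<eta> :: real assume "\<eta> > 0"
  let ?Fx = "RS_integral f h a x" and ?Fy = "RS_integral f h a y"
  have Fx: "has_RS_integral f h a x ?Fx" and Fy: "has_RS_integral f h a y ?Fy"
    using has_RS_integral_RS_integral[OF _ _ fc ctl] xy by auto
  have "\<eta>/2 > 0" using \<open>\<eta> > 0\<close> by simp
  then obtain d1 where "d1 > 0" and d1: "\<forall>ts xs. is_tagged_partition a x ts xs \<and> mesh_less ts d1 \<longrightarrow>
      \<bar>riemann_sum f h ts xs - ?Fx\<bar> < \<eta>/2"
    using Fx unfolding has_RS_integral_iff_riemann_sum by blast
  obtain d2 where "d2 > 0" and d2: "\<forall>ts xs. is_tagged_partition a y ts xs \<and> mesh_less ts d2 \<longrightarrow>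
      \<bar>riemann_sum f h ts xs - ?Fy\<bar> < \<eta>/2"
    using Fy \<open>\<eta>/2 > 0\<close> unfolding has_RS_integral_iff_riemann_sum by blast
  obtain ts where ts: "is_partition a x ts" "mesh_less ts (min d1 d2)"
    using exists_partition_mesh_less[OF _ xy(1), of "min d1 d2"] \<open>d1 > 0\<close> \<open>d2 > 0\<close> by auto
  obtain ss where ss: "is_partition x y ss" "mesh_less ss d2"
    using exists_partition_mesh_less[OF \<open>d2 > 0\<close> xy(2)] by auto
  have "mesh_less ts d1" "mesh_less ts d2" using ts(2) mesh_less_mono by fastforce+
  then have "is_partition a y (butlast ts @ ss)" "mesh_less (butlast ts @ ss) d2"
    using is_partition_append[OF ts(1) ss(1)] mesh_less_append[OF ts(1) ss(1) _ ss(2)] by auto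
  then have "\<bar>left_sum f h ts + left_sum f h ss - ?Fy\<bar> < \<eta>/2"
    using d2 is_tagged_partition_butlast left_sum_append[OF ts(1) ss(1)] by metis
  moreover have "\<bar>left_sum f h ts - ?Fx\<bar> < \<eta>/2"
    using d1 is_tagged_partition_butlast[OF ts(1)] \<open>mesh_less ts d1\<close> by metis
  moreover have "\<bar>left_sum f h ss - f x * (h y - h x)\<bar> \<le> \<epsilon> * (W y - W x)"
    by (rule left_sum_close_to_one_step[OF osc ctl]) (use ss(1) xy in \<open>auto simp: is_partition_def\<close>)
  ultimately show "\<bar>?Fy - ?Fx - f x * (h y - h x)\<bar> \<le> \<epsilon> * (W y - W x) + \<eta>"
    by (simp add: abs_if split: if_splits)
qed

lemma RS_integral_diff_le:
  assumes fc: "continuous_on {a..b} f" and ctl: "controlled_by h W a b"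
    and osc: "oscillation_le f a b \<delta> \<epsilon>" and "0 \<le> \<epsilon>" and M: "\<forall>u\<in>{a..b}. \<bar>f u\<bar> \<le> M"
    and uv: "u \<in> {a..b}" "v \<in> {a..b}" "\<bar>v - u\<bar> < \<delta>"
  shows "\<bar>RS_integral f h a v - RS_integral f h a u\<bar> \<le> \<epsilon> * (W b - W a) + M * \<bar>h v - h u\<bar>"
  using uv
proof (induction u v rule: linorder_wlog)
  case (le u v)
  have "\<bar>RS_integral f h a v - RS_integral f h a u - f u * (h v - h u)\<bar> \<le> \<epsilon> * (W v - W u)"
    using RS_integral_increment[OF fc ctl osc] le by auto
  moreover have "W a \<le> W u" "W v \<le> W b"
    using controlled_by_mono[OF ctl] le by auto
  then have "\<epsilon> * (W v - W u) \<le> \<epsilon> * (W b - W a)"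
    using \<open>0 \<le> \<epsilon>\<close> by (intro mult_left_mono) auto
  moreover have "\<bar>f u * (h v - h u)\<bar> \<le> M * \<bar>h v - h u\<bar>"
    unfolding abs_mult using M le by (intro mult_right_mono) auto
  ultimately show ?case by linarith
next
  case (sym u v)
  then show ?case by (simp add: abs_minus_commute)
qed

lemma continuous_on_RS_integral:
  assumes ab: "a \<le> b" and fc: "continuous_on {a..b} f" and hc: "continuous_on {a..b} h"
    and ctl: "controlled_by h W a b"
  shows "continuous_on {a..b} (\<lambda>t. RS_integral f h a t)"
  unfolding continuous_on_iff
proof (intro ballI allI impI)
  fix x e :: real assume x: "x \<in> {a..b}" and "e > 0"
  define D where "D = W b - W a"
  have "0 \<le> D" using controlled_by_mono[OF ctl order.refl ab order.refl] by (simp add: D_def)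
  obtain M where "M > 0" and M: "\<forall>u\<in>{a..b}. \<bar>f u\<bar> \<le> M"
    using compact_imp_bounded[OF compact_continuous_image[OF fc compact_Icc]]
    unfolding bounded_pos by auto
  define \<epsilon> where "\<epsilon> = e / (2 * (D + 1))"
  have "\<epsilon> > 0" "\<epsilon> * D < e / 2"
    using \<open>e > 0\<close> \<open>0 \<le> D\<close> by (simp_all add: \<epsilon>_def field_simps)
  obtain \<delta> where "\<delta> > 0" and osc: "oscillation_le f a b \<delta> \<epsilon>"
    using exists_oscillation_le[OF fc \<open>\<epsilon> > 0\<close>] by blast
  have "e / (2 * M) > 0" using \<open>e > 0\<close> \<open>M > 0\<close> by simp
  then obtain d' where "d' > 0" and d': "\<forall>y\<in>{a..b}. dist y x < d' \<longrightarrow> dist (h y) (h x) < e / (2 * M)"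
    using hc x unfolding continuous_on_iff by blast
  have "dist (RS_integral f h a y) (RS_integral f h a x) < e"
    if y: "y \<in> {a..b}" "dist y x < min \<delta> d'" for y
  proof -
    have "\<bar>h y - h x\<bar> < e / (2 * M)" using d' y by (simp add: dist_real_def)
    then have "M * \<bar>h y - h x\<bar> < e / 2" using \<open>M > 0\<close> by (simp add: field_simps)
    moreover have "\<bar>RS_integral f h a y - RS_integral f h a x\<bar> \<le> \<epsilon> * D + M * \<bar>h y - h x\<bar>"
      unfolding D_def using y x \<open>\<epsilon> > 0\<close>
      by (intro RS_integral_diff_le[OF fc ctl osc _ M]) (auto simp: dist_real_def)
    ultimately show ?thesis using \<open>\<epsilon> * D < e / 2\<close> by (simp add: dist_real_def)
  qed
  then show "\<exists>d>0. \<forall>y\<in>{a..b}. dist y x < d \<longrightarrow> dist (RS_integral f h a y) (RS_integral f h a x) < e"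
    using \<open>\<delta> > 0\<close> \<open>d' > 0\<close> by (metis min_less_iff_conj)
qed

definition variation_sum :: "(real \<Rightarrow> 'a::real_normed_vector) \<Rightarrow> real list \<Rightarrow> real" where
  "variation_sum g ts = sum_adj (\<lambda>u v. norm (g v - g u)) ts"

lemma variation_sums_conv_variation_sum:
  "variation_sums g a b = variation_sum g ` {ts. is_partition a b ts}"
  unfolding variation_sums_def variation_sum_def sum_adj_conv_sum_nth ..

lemma variation_sum_extend:
  assumes ts: "is_partition a x ts" and "x < y"
  shows "is_partition a y (butlast ts @ [x, y])"
    and "variation_sum g (butlast ts @ [x, y]) = variation_sum g ts + norm (g y - g x)"
proof -
  show "is_partition a y (butlast ts @ [x, y])"
    using is_partition_append[OF ts is_partition_two[OF \<open>x < y\<close>]] .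
  show "variation_sum g (butlast ts @ [x, y]) = variation_sum g ts + norm (g y - g x)"
    using sum_adj_append[of "\<lambda>u v. norm (g v - g u)" "butlast ts" x "[y]"]
    unfolding variation_sum_def is_partition_snoc_cons(1)[OF ts] by simp
qed

lemma bdd_above_variation_sums_subinterval:
  assumes bv: "has_bounded_variation_on g a b" and "a \<le> x" "x \<le> b"
  shows "bdd_above (variation_sums g a x)"
proof (cases "x = b")
  case False
  then have "x < b" using \<open>x \<le> b\<close> by simp
  obtain B where B: "\<forall>s\<in>variation_sums g a b. s \<le> B"
    using bv unfolding has_bounded_variation_on_def bdd_above_def by blast
  have "variation_sum g ts \<le> B" if "is_partition a x ts" for ts
  proof -
    have "variation_sum g (butlast ts @ [x, b]) \<le> B"
      using B variation_sum_extend(1)[OF that \<open>x < b\<close>]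
      unfolding variation_sums_conv_variation_sum by blast
    then show ?thesis
      using variation_sum_extend(2)[OF that \<open>x < b\<close>, of g] norm_ge_zero[of "g b - g x"] by linarith
  qed
  then show ?thesis
    unfolding bdd_above_def variation_sums_conv_variation_sum by blast
qed (use bv in \<open>simp add: has_bounded_variation_on_def\<close>)

lemma path_length_add_norm_le:
  assumes bv: "has_bounded_variation_on g a b" and "a \<le> x" "x \<le> y" "y \<le> b"
  shows "path_length g a x + norm (g y - g x) \<le> path_length g a y"
proof (cases "x = y")
  case False
  then have "x < y" using \<open>x \<le> y\<close> by simp
  have bdd: "bdd_above (variation_sums g a y)"
    using bdd_above_variation_sums_subinterval[OF bv] assms by auto
  have "variation_sum g ts \<le> path_length g a y - norm (g y - g x)" if "is_partition a x ts" for ts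
  proof -
    have "variation_sum g (butlast ts @ [x, y]) \<le> path_length g a y"
      unfolding path_length_def using variation_sum_extend(1)[OF that \<open>x < y\<close>]
      by (intro cSup_upper[OF _ bdd]) (auto simp: variation_sums_conv_variation_sum)
    then show ?thesis
      using variation_sum_extend(2)[OF that \<open>x < y\<close>, of g] by linarith
  qed
  moreover have "\<exists>ts. is_partition a x ts" using exists_partition[OF \<open>a \<le> x\<close>] .
  ultimately have "path_length g a x \<le> path_length g a y - norm (g y - g x)"
    unfolding path_length_def variation_sums_conv_variation_sum by (intro cSup_least) auto
  then show ?thesis by simp
qed simp

lemma path_length_refl: "path_length g a a = 0"
proof -
  have "{ts. is_partition a a ts} = {[a]}" using is_partition_same_ends by auto
  then show ?thesis
    unfolding path_length_def variation_sums_conv_variation_sum by (simp add: variation_sum_def)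
qed

lemma path_length_nonneg:
  assumes "has_bounded_variation_on g a b" "a \<le> x" "x \<le> b"
  shows "0 \<le> path_length g a x"
  using path_length_add_norm_le[OF assms(1) order.refl assms(2,3)] path_length_refl[of g a]
    norm_ge_zero[of "g x - g a"] by linarith

lemma controlled_by_path_length:
  fixes g :: "real \<Rightarrow> 'a::euclidean_space"
  assumes "has_bounded_variation_on g a b" "e \<in> Basis"
  shows "controlled_by (\<lambda>u. g u \<bullet> e) (path_length g a) a b"
  unfolding controlled_by_def
proof (intro allI impI)
  fix x y assume "a \<le> x" "x \<le> y" "y \<le> b"
  have "\<bar>g y \<bullet> e - g x \<bullet> e\<bar> \<le> norm (g y - g x)"
    using Basis_le_norm[OF assms(2), of "g y - g x"] by (simp add: inner_diff_left)
  then show "\<bar>g y \<bullet> e - g x \<bullet> e\<bar> \<le> path_length g a y - path_length g a x"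
    using path_length_add_norm_le[OF assms(1) \<open>a \<le> x\<close> \<open>x \<le> y\<close> \<open>y \<le> b\<close>] by simp
qed

section \<open>Factorial decay of the signature\<close>

lemma L2_set_RS_integral_le:
  assumes "finite A" "a \<le> t"
    and I: "\<And>j. j \<in> A \<Longrightarrow> has_RS_integral (f j) (h j) a t (I j)"
    and B: "\<And>ts. is_partition a t ts \<Longrightarrow> L2_set (\<lambda>j. left_sum (f j) (h j) ts) A \<le> B"
  shows "L2_set I A \<le> B"
proof (rule field_le_epsilon)
  fix \<eta> :: real assume "\<eta> > 0"
  define \<epsilon> where "\<epsilon> = \<eta> / (card A + 1)"
  have "\<epsilon> > 0" "card A * \<epsilon> \<le> \<eta>"
    using \<open>\<eta> > 0\<close> by (simp_all add: \<epsilon>_def field_simps)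
  have "\<forall>j\<in>A. \<exists>d>0. \<forall>ts xs. is_tagged_partition a t ts xs \<and> mesh_less ts d \<longrightarrow>
      \<bar>riemann_sum (f j) (h j) ts xs - I j\<bar> < \<epsilon>"
    using I \<open>\<epsilon> > 0\<close> unfolding has_RS_integral_iff_riemann_sum by blast
  then obtain d where d: "\<And>j. j \<in> A \<Longrightarrow> d j > 0"
    and close: "\<And>j ts xs. j \<in> A \<Longrightarrow> is_tagged_partition a t ts xs \<Longrightarrow> mesh_less ts (d j) \<Longrightarrow>
      \<bar>riemann_sum (f j) (h j) ts xs - I j\<bar> < \<epsilon>"
    by metis
  define d0 where "d0 = Min (insert 1 (d ` A))"
  have "d0 > 0" using d \<open>finite A\<close> by (simp add: d0_def)
  then obtain ts where ts: "is_partition a t ts" "mesh_less ts d0"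
    using exists_partition_mesh_less[OF _ \<open>a \<le> t\<close>] by blast
  have "\<bar>I j - left_sum (f j) (h j) ts\<bar> < \<epsilon>" if "j \<in> A" for j
  proof -
    have "d0 \<le> d j" using that \<open>finite A\<close> by (simp add: d0_def)
    then have "mesh_less ts (d j)" using ts(2) mesh_less_mono by blast
    then show ?thesis
      using close[OF that is_tagged_partition_butlast(1)[OF ts(1)]]
      by (simp add: is_tagged_partition_butlast(2)[OF ts(1)] abs_minus_commute)
  qed
  then have "(\<Sum>j\<in>A. \<bar>I j - left_sum (f j) (h j) ts\<bar>) \<le> card A * \<epsilon>"
    using sum_mono[of A _ "\<lambda>_. \<epsilon>"] by (simp add: less_imp_le)
  moreover have "L2_set I A \<le> L2_set (\<lambda>j. left_sum (f j) (h j) ts) A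
      + L2_set (\<lambda>j. I j - left_sum (f j) (h j) ts) A"
    using L2_set_triangle_ineq[of "\<lambda>j. left_sum (f j) (h j) ts"
        "\<lambda>j. I j - left_sum (f j) (h j) ts" A]
    by simp
  ultimately show "L2_set I A \<le> B + \<eta>"
    using B[OF ts(1)] L2_set_le_sum_abs[of "\<lambda>j. I j - left_sum (f j) (h j) ts" A] \<open>card A * \<epsilon> \<le> \<eta>\<close>
    by linarith
qed

lemma L2_set_inner_Basis:
  fixes x :: "'a::euclidean_space"
  shows "L2_set (\<lambda>e. x \<bullet> e) Basis = norm x"
  using euclidean_dist_l2[of x 0] by (simp add: dist_real_def L2_set_def)

lemma L2_set_mult_Times:
  assumes "finite A" "finite B"
  shows "L2_set (\<lambda>(a, b). p a * q b) (A \<times> B) = L2_set p A * L2_set q B"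
proof -
  have "(\<Sum>x\<in>A \<times> B. ((\<lambda>(a, b). p a * q b) x)\<^sup>2) = (\<Sum>a\<in>A. (p a)\<^sup>2) * (\<Sum>b\<in>B. (q b)\<^sup>2)"
    unfolding sum_product sum.cartesian_product by (intro sum.cong) (auto simp: power_mult_distrib)
  then show ?thesis unfolding L2_set_def by (simp add: real_sqrt_mult)
qed

definition basis_words :: "nat \<Rightarrow> 'a::euclidean_space list set" where
  "basis_words k = {w. set w \<subseteq> Basis \<and> length w = k}"

lemma finite_basis_words: "finite (basis_words k)"
  unfolding basis_words_def by (rule finite_lists_length_eq[OF finite_Basis])

lemma basis_words_0: "basis_words 0 = {[]}"
  unfolding basis_words_def by auto

lemma L2_set_basis_words_Suc:
  "L2_set \<phi> (basis_words (Suc k)) = L2_set (\<lambda>(e, w). \<phi> (e # w)) (Basis \<times> basis_words k)"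
proof -
  have img: "basis_words (Suc k) = (\<lambda>(e, w). e # w) ` (Basis \<times> basis_words k)"
    unfolding basis_words_def by (auto simp: image_iff length_Suc_conv)
  have "inj_on (\<lambda>(e, w). e # w) (Basis \<times> basis_words k)"
    by (auto simp: inj_on_def)
  from sum.reindex[OF this, of "\<lambda>w. (\<phi> w)\<^sup>2"] show ?thesis
    unfolding L2_set_def img by (simp add: case_prod_beta comp_def)
qed

lemma L2_set_basis_words_rev:
  "L2_set (\<lambda>w. \<phi> (rev w)) (basis_words k) = L2_set \<phi> (basis_words k)"
proof -
  have "(\<Sum>w\<in>basis_words k. (\<phi> (rev w))\<^sup>2) = (\<Sum>w\<in>rev ` basis_words k. (\<phi> w)\<^sup>2)"
    by (rule sum.reindex[OF inj_on_inverseI[of _ rev], symmetric, unfolded comp_def]) simp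
  also have "rev ` basis_words k = basis_words k"
    unfolding basis_words_def by (force simp: image_iff intro: exI[of _ "rev w" for w])
  finally show ?thesis unfolding L2_set_def by simp
qed

lemma power_mult_diff_le:
  fixes p q :: real
  assumes "0 \<le> p" "p \<le> q"
  shows "p ^ k * (q - p) \<le> (q ^ Suc k - p ^ Suc k) / Suc k"
proof -
  have "(\<Sum>j<Suc k. p ^ k) \<le> (\<Sum>j<Suc k. q ^ j * p ^ (k - j))"
  proof (rule sum_mono)
    fix j assume "j \<in> {..<Suc k}"
    then have "p ^ k = p ^ j * p ^ (k - j)" by (simp add: power_add[symmetric])
    also have "\<dots> \<le> q ^ j * p ^ (k - j)" using assms by (intro mult_right_mono power_mono) auto
    finally show "p ^ k \<le> q ^ j * p ^ (k - j)" .
  qed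
  then have "(q - p) * (Suc k * p ^ k) \<le> (q - p) * (\<Sum>j<Suc k. q ^ j * p ^ (k - j))"
    using assms by (intro mult_left_mono) auto
  also have "\<dots> = q ^ Suc k - p ^ Suc k" by (rule diff_power_eq_sum[symmetric])
  finally show ?thesis by (simp add: field_simps)
qed

lemma L2_set_left_sums_le:
  fixes g :: "real \<Rightarrow> 'a::euclidean_space" and F :: "'w \<Rightarrow> real \<Rightarrow> real"
  assumes bv: "has_bounded_variation_on g a b" and "finite Ws"
    and ts: "is_partition a t ts" and "t \<le> b"
    and F: "\<And>u. u \<in> {a..b} \<Longrightarrow> L2_set (\<lambda>w. F w u) Ws \<le> path_length g a u ^ k / fact k"
  shows "L2_set (\<lambda>(e, w). left_sum (F w) (\<lambda>u. g u \<bullet> e) ts) (Basis \<times> Ws)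
    \<le> path_length g a t ^ Suc k / fact (Suc k)"
proof -
  let ?V = "path_length g a"
  have "L2_set (\<lambda>(e, w). left_sum (F w) (\<lambda>u. g u \<bullet> e) ts) (Basis \<times> Ws)
      = L2_set (\<lambda>j. sum_adj (\<lambda>u v. case j of (e, w) \<Rightarrow> ((g v - g u) \<bullet> e) * F w u) ts) (Basis \<times> Ws)"
    unfolding left_sum_def by (intro L2_set_cong) (auto simp: inner_diff_left mult.commute)
  also have "\<dots> \<le> sum_adj (\<lambda>u v. L2_set (\<lambda>(e, w). ((g v - g u) \<bullet> e) * F w u) (Basis \<times> Ws)) ts"
    by (rule L2_set_sum_adj_le)
  also have "\<dots> = sum_adj (\<lambda>u v. norm (g v - g u) * L2_set (\<lambda>w. F w u) Ws) ts"
    by (simp add: L2_set_mult_Times[OF finite_Basis \<open>finite Ws\<close>] L2_set_inner_Basis)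
  also have "\<dots> \<le> sum_adj (\<lambda>u v. ?V v ^ Suc k / fact (Suc k) - ?V u ^ Suc k / fact (Suc k)) ts"
  proof (rule sum_adj_mono, rule successively_mono[OF successively_if_sorted_wrt])
    show "sorted_wrt (<) ts" using ts by (simp add: is_partition_def)
    fix u v assume "u \<in> set ts" "v \<in> set ts" "u < v"
    then have uv: "a \<le> u" "u \<le> v" "v \<le> b"
      using is_partition_bounds[OF ts] \<open>t \<le> b\<close> by force+
    have step: "norm (g v - g u) \<le> ?V v - ?V u"
      using path_length_add_norm_le[OF bv uv] by simp
    have "0 \<le> ?V u" using path_length_nonneg[OF bv] uv by auto
    have "?V u \<le> ?V v" using step norm_ge_zero[of "g v - g u"] by linarith
    have "norm (g v - g u) * L2_set (\<lambda>w. F w u) Ws \<le> (?V v - ?V u) * (?V u ^ k / fact k)"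
      using F[of u] uv step \<open>0 \<le> ?V u\<close> \<open>?V u \<le> ?V v\<close> by (intro mult_mono) auto
    also have "\<dots> = ?V u ^ k * (?V v - ?V u) / fact k" by simp
    also have "\<dots> \<le> (?V v ^ Suc k - ?V u ^ Suc k) / Suc k / fact k"
      using power_mult_diff_le[OF \<open>0 \<le> ?V u\<close> \<open>?V u \<le> ?V v\<close>] by (intro divide_right_mono) auto
    also have "\<dots> = ?V v ^ Suc k / fact (Suc k) - ?V u ^ Suc k / fact (Suc k)"
      by (simp only: divide_divide_eq_left fact_Suc diff_divide_distrib)
    finally show "norm (g v - g u) * L2_set (\<lambda>w. F w u) Ws
        \<le> ?V v ^ Suc k / fact (Suc k) - ?V u ^ Suc k / fact (Suc k)" .
  qed
  also have "\<dots> = ?V t ^ Suc k / fact (Suc k)"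
    using sum_adj_telescope[of ts "\<lambda>v. ?V v ^ Suc k / fact (Suc k)"] ts path_length_refl[of g a]
    by (simp add: is_partition_def)
  finally show ?thesis .
qed

lemma sig_rev_continuous_and_L2_le:
  fixes g :: "real \<Rightarrow> 'a::euclidean_space"
  assumes ab: "a \<le> b" and gc: "continuous_on {a..b} g" and bv: "has_bounded_variation_on g a b"
  shows "(\<forall>w\<in>basis_words k. continuous_on {a..b} (sig_rev g a w)) \<and>
    (\<forall>t\<in>{a..b}. L2_set (\<lambda>w. sig_rev g a w t) (basis_words k) \<le> path_length g a t ^ k / fact k)"
proof (induction k)
  case 0
  show ?case by (simp add: basis_words_0 L2_set_def)
next
  case (Suc k)
  have ctl: "controlled_by (\<lambda>u. g u \<bullet> e) (path_length g a) a b" if "e \<in> Basis" for e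
    using controlled_by_path_length[OF bv that] .
  have cont_e: "continuous_on {a..b} (\<lambda>u. g u \<bullet> e)" for e
    by (intro continuous_intros gc)
  have "continuous_on {a..b} (sig_rev g a (e # w))" if "e \<in> Basis" "w \<in> basis_words k" for e w
    using continuous_on_RS_integral[OF ab _ cont_e ctl[OF that(1)]] Suc.IH that(2) by simp
  then have "\<forall>w\<in>basis_words (Suc k). continuous_on {a..b} (sig_rev g a w)"
    unfolding basis_words_def by (force simp: length_Suc_conv)
  moreover have "L2_set (\<lambda>w. sig_rev g a w t) (basis_words (Suc k))
      \<le> path_length g a t ^ Suc k / fact (Suc k)"
    if t: "t \<in> {a..b}" for t
    unfolding L2_set_basis_words_Suc
  proof (rule L2_set_RS_integral_le[where f = "\<lambda>(e, w). sig_rev g a w"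
        and h = "\<lambda>(e, w) u. g u \<bullet> e"])
    show "finite (Basis \<times> basis_words k)" by (simp add: finite_basis_words)
    show "a \<le> t" using t by simp
  next
    fix j :: "'a \<times> 'a list" assume "j \<in> Basis \<times> basis_words k"
    then show "has_RS_integral ((\<lambda>(e, w). sig_rev g a w) j) ((\<lambda>(e, w) u. g u \<bullet> e) j) a t
        ((\<lambda>(e, w). sig_rev g a (e # w) t) j)"
      using has_RS_integral_RS_integral[OF _ _ _ ctl] Suc.IH t by auto
  next
    fix ts assume "is_partition a t ts"
    then show "L2_set (\<lambda>j. left_sum ((\<lambda>(e, w). sig_rev g a w) j) ((\<lambda>(e, w) u. g u \<bullet> e) j) ts)
        (Basis \<times> basis_words k) \<le> path_length g a t ^ Suc k / fact (Suc k)"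
      using L2_set_left_sums_le[OF bv finite_basis_words, of t ts "\<lambda>w. sig_rev g a w" k] Suc.IH t
      by (simp add: case_prod_unfold)
  qed
  ultimately show ?case by blast
qed

lemma abs_sig_inner_le:
  fixes \<gamma> \<sigma> :: "real \<Rightarrow> 'a::euclidean_space"
  assumes "a \<le> b"
    and "continuous_on {a..b} \<gamma>" "continuous_on {a..b} \<sigma>"
    and "has_bounded_variation_on \<gamma> a b" "has_bounded_variation_on \<sigma> a b"
    and "s \<in> {a..b}" "t \<in> {a..b}"
  shows "\<bar>sig_inner \<gamma> \<sigma> a s t n\<bar> \<le> (path_length \<gamma> a s * path_length \<sigma> a t) ^ n / (fact n)\<^sup>2"
proof -
  have "\<bar>sig_inner \<gamma> \<sigma> a s t n\<bar>
      \<le> (\<Sum>w\<in>basis_words n. \<bar>sig_coord \<gamma> a w s\<bar> * \<bar>sig_coord \<sigma> a w t\<bar>)"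
    unfolding sig_inner_def basis_words_def[symmetric] abs_mult[symmetric] by (rule sum_abs)
  also have "\<dots> \<le> L2_set (\<lambda>w. sig_coord \<gamma> a w s) (basis_words n)
      * L2_set (\<lambda>w. sig_coord \<sigma> a w t) (basis_words n)"
    by (rule L2_set_mult_ineq)
  also have "\<dots> = L2_set (\<lambda>w. sig_rev \<gamma> a w s) (basis_words n)
      * L2_set (\<lambda>w. sig_rev \<sigma> a w t) (basis_words n)"
    unfolding sig_coord_def
    using L2_set_basis_words_rev[of "\<lambda>w. sig_rev \<gamma> a w s" n]
      L2_set_basis_words_rev[of "\<lambda>w. sig_rev \<sigma> a w t" n]
    by simp
  also have "\<dots> \<le> (path_length \<gamma> a s ^ n / fact n) * (path_length \<sigma> a t ^ n / fact n)"
    using sig_rev_continuous_and_L2_le[OF assms(1,2,4), of n]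
      sig_rev_continuous_and_L2_le[OF assms(1,3,5), of n]
      path_length_nonneg[OF assms(4)] path_length_nonneg[OF assms(5)] assms(6,7)
    by (intro mult_mono) auto
  also have "\<dots> = (path_length \<gamma> a s * path_length \<sigma> a t) ^ n / (fact n)\<^sup>2"
    by (simp add: power_mult_distrib power2_eq_square)
  finally show ?thesis .
qed

section \<open>Power series with factorially decaying coefficients\<close>

lemma summable_bessel_series:
  fixes y C :: real
  assumes "0 \<le> C"
  shows "summable (\<lambda>n. y ^ n * C ^ (n + k) / (fact n * fact (n + k)))"
proof (rule summable_comparison_test)
  show "summable (\<lambda>n. C ^ k * ((\<bar>y\<bar> * C) ^ n / fact n))"
    using summable_mult[OF summable_exp[of "\<bar>y\<bar> * C"], of "C ^ k"] by (simp add: field_simps)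
  have "\<bar>y ^ n * C ^ (n + k) / (fact n * fact (n + k))\<bar> \<le> C ^ k * ((\<bar>y\<bar> * C) ^ n / fact n)" for n
  proof -
    have "\<bar>y ^ n * C ^ (n + k) / (fact n * fact (n + k))\<bar>
        = \<bar>y\<bar> ^ n * C ^ (n + k) / fact n / fact (n + k)"
      using assms by (simp add: abs_mult power_abs)
    also have "\<dots> \<le> \<bar>y\<bar> ^ n * C ^ (n + k) / fact n / 1"
      using assms by (intro divide_left_mono) auto
    also have "\<dots> = C ^ k * ((\<bar>y\<bar> * C) ^ n / fact n)"
      by (simp add: power_add power_mult_distrib mult_ac)
    finally show ?thesis .
  qed
  then show "\<exists>N. \<forall>n\<ge>N. norm (y ^ n * C ^ (n + k) / (fact n * fact (n + k)))
      \<le> C ^ k * ((\<bar>y\<bar> * C) ^ n / fact n)"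
    by simp
qed

lemma besselI_series:
  fixes y C :: real
  assumes "0 < y" "0 \<le> C"
  shows "(\<Sum>m. y ^ m * C ^ (m + k) / (fact m * fact (m + k)))
    = (sqrt C / sqrt y) ^ k * besselI k (2 * sqrt (y * C))"
proof -
  define r where "r = sqrt (y * C)"
  have "0 \<le> r" "r\<^sup>2 = y * C" using assms by (simp_all add: r_def)
  have "sqrt C / sqrt y * r = C"
    using assms by (simp add: r_def real_sqrt_mult field_simps)
  have "(sqrt C / sqrt y) ^ k * r ^ (2 * m + k) = (r\<^sup>2) ^ m * (sqrt C / sqrt y * r) ^ k" for m
    by (simp add: power_add power_mult power_mult_distrib power_divide)
  also have "\<dots> m = y ^ m * C ^ (m + k)" for m
    unfolding \<open>r\<^sup>2 = y * C\<close> \<open>sqrt C / sqrt y * r = C\<close> by (simp add: power_add power_mult_distrib)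
  finally have rescale: "(sqrt C / sqrt y) ^ k * (r ^ (2 * m + k) / (fact m * fact (m + k)))
      = y ^ m * C ^ (m + k) / (fact m * fact (m + k))" for m
    by (simp add: mult_ac)
  have "r ^ (2 * m + k) = r ^ m * r ^ (m + k)" for m
    using power_add[of r m "m + k"] by (simp add: mult_2 add.assoc)
  then have "summable (\<lambda>m. r ^ (2 * m + k) / (fact m * fact (m + k)))"
    using summable_bessel_series[OF \<open>0 \<le> r\<close>, of r k] by simp
  then have "(\<Sum>m. (sqrt C / sqrt y) ^ k * (r ^ (2 * m + k) / (fact m * fact (m + k))))
      = (sqrt C / sqrt y) ^ k * besselI k (2 * r)"
    unfolding besselI_def by (simp only: suminf_mult nonzero_mult_div_cancel_left zero_neq_numeral)
  then show ?thesis unfolding rescale by (simp only: r_def)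
qed

lemma diffs_funpow:
  fixes c :: "nat \<Rightarrow> 'a::field_char_0"
  shows "(diffs ^^ k) c = (\<lambda>n. fact (n + k) / fact n * c (n + k))"
proof (induction k)
  case (Suc k)
  have cancel: "m * (A / (m * B) * C) = A / B * C" if "m \<noteq> 0" "B \<noteq> 0" for m A B C :: 'a
    using that by (simp add: field_simps)
  show ?case
  proof
    fix n
    have "(diffs ^^ Suc k) c n = of_nat (Suc n) * (fact (Suc n + k) / fact (Suc n) * c (Suc n + k))"
      by (simp only: funpow.simps comp_def diffs_def Suc)
    also have "\<dots> = fact (n + Suc k) / fact n * c (n + Suc k)"
      unfolding fact_Suc[of n] add_Suc_shift by (rule cancel[OF of_nat_neq_0 fact_nonzero])
    finally show "(diffs ^^ Suc k) c n = fact (n + Suc k) / fact n * c (n + Suc k)" .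
  qed
qed simp

lemma higher_deriv_power_series:
  fixes c :: "nat \<Rightarrow> 'a::{real_normed_field,banach}"
  assumes summable: "\<And>k x. summable (\<lambda>n. (diffs ^^ k) c n * x ^ n)"
  shows "(deriv ^^ k) (\<lambda>x. \<Sum>n. c n * x ^ n) = (\<lambda>x. \<Sum>n. (diffs ^^ k) c n * x ^ n)"
    and "((deriv ^^ k) (\<lambda>x. \<Sum>n. c n * x ^ n)
      has_field_derivative (\<Sum>n. (diffs ^^ Suc k) c n * x ^ n)) (at x)"
proof -
  have D: "((\<lambda>x. \<Sum>n. (diffs ^^ k) c n * x ^ n)
      has_field_derivative (\<Sum>n. (diffs ^^ Suc k) c n * x ^ n)) (at x)"
    for k x
    using termdiffs_strong_converges_everywhere[OF summable, of k x] by simp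
  show E: "(deriv ^^ k) (\<lambda>x. \<Sum>n. c n * x ^ n) = (\<lambda>x. \<Sum>n. (diffs ^^ k) c n * x ^ n)" for k
    by (induction k) (simp_all add: DERIV_imp_deriv[OF D])
  show "((deriv ^^ k) (\<lambda>x. \<Sum>n. c n * x ^ n)
      has_field_derivative (\<Sum>n. (diffs ^^ Suc k) c n * x ^ n)) (at x)"
    unfolding E by (rule D)
qed

lemma abs_diffs_funpow_le:
  fixes c :: "nat \<Rightarrow> real"
  assumes "\<And>n. \<bar>c n\<bar> \<le> C ^ n / (fact n)\<^sup>2"
  shows "\<bar>(diffs ^^ k) c n * y ^ n\<bar> \<le> \<bar>y\<bar> ^ n * C ^ (n + k) / (fact n * fact (n + k))"
proof -
  have "\<bar>(diffs ^^ k) c n * y ^ n\<bar> = fact (n + k) / fact n * (\<bar>c (n + k)\<bar> * \<bar>y\<bar> ^ n)"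
    by (simp add: diffs_funpow abs_mult power_abs)
  also have "\<dots> \<le> fact (n + k) / fact n * (C ^ (n + k) / (fact (n + k))\<^sup>2 * \<bar>y\<bar> ^ n)"
    by (intro mult_left_mono mult_right_mono assms) auto
  also have "\<dots> = \<bar>y\<bar> ^ n * C ^ (n + k) / (fact n * fact (n + k))"
    by (simp add: power2_eq_square field_simps)
  finally show ?thesis .
qed

lemma power_series_factorial_sq_decay:
  fixes c :: "nat \<Rightarrow> real"
  assumes cb: "\<And>n. \<bar>c n\<bar> \<le> C ^ n / (fact n)\<^sup>2" and "0 \<le> C"
  defines "f \<equiv> \<lambda>x. \<Sum>n. x ^ n * c n"
  shows "(deriv ^^ k) f differentiable (at x)"
    and "(deriv ^^ k) f x = (\<Sum>l. x ^ l * (fact (l + k) / fact l) * c (l + k))"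
    and "\<bar>(deriv ^^ k) f x\<bar> \<le> (\<Sum>l. \<bar>x\<bar> ^ l * C ^ (l + k) / (fact l * fact (l + k)))"
proof -
  have f: "f = (\<lambda>x. \<Sum>n. c n * x ^ n)" unfolding f_def by (simp add: mult.commute)
  have majorant: "summable (\<lambda>n. \<bar>y\<bar> ^ n * C ^ (n + k) / (fact n * fact (n + k)))" for y k
    by (rule summable_bessel_series[OF \<open>0 \<le> C\<close>])
  have summable: "summable (\<lambda>n. (diffs ^^ k) c n * y ^ n)" for k y
    by (rule summable_comparison_test[OF _ majorant]) (use abs_diffs_funpow_le[OF cb] in auto)
  show "(deriv ^^ k) f differentiable (at x)"
    unfolding f using higher_deriv_power_series(2)[OF summable]
    by (auto simp: differentiable_def has_field_derivative_def)
  have deriv_f: "(deriv ^^ k) f x = (\<Sum>n. (diffs ^^ k) c n * x ^ n)"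
    unfolding f higher_deriv_power_series(1)[OF summable] ..
  then show "(deriv ^^ k) f x = (\<Sum>l. x ^ l * (fact (l + k) / fact l) * c (l + k))"
    by (simp add: diffs_funpow mult_ac)
  have "summable (\<lambda>n. \<bar>(diffs ^^ k) c n * x ^ n\<bar>)"
    by (rule summable_comparison_test[OF _ majorant]) (use abs_diffs_funpow_le[OF cb] in auto)
  then have "\<bar>(deriv ^^ k) f x\<bar> \<le> (\<Sum>n. \<bar>(diffs ^^ k) c n * x ^ n\<bar>)"
    unfolding deriv_f by (rule summable_rabs)
  also have "\<dots> \<le> (\<Sum>l. \<bar>x\<bar> ^ l * C ^ (l + k) / (fact l * fact (l + k)))"
    by (intro suminf_le abs_diffs_funpow_le[OF cb] majorant) fact
  finally show "\<bar>(deriv ^^ k) f x\<bar> \<le> (\<Sum>l. \<bar>x\<bar> ^ l * C ^ (l + k) / (fact l * fact (l + k)))" .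
qed

theorem mainTheorem15:
  fixes \<gamma> \<sigma> :: "real \<Rightarrow> 'a::euclidean_space"
    and a b s t :: real
    and f :: "real \<Rightarrow> real"
  assumes "a \<le> b"
    and "continuous_on {a..b} \<gamma>" and "continuous_on {a..b} \<sigma>"
    and "has_bounded_variation_on \<gamma> a b" and "has_bounded_variation_on \<sigma> a b"
    and "s \<in> {a..b}" and "t \<in> {a..b}"
    and f_def: "f = (\<lambda>x. \<Sum>k. x ^ k * sig_inner \<gamma> \<sigma> a s t k)"
  shows "(\<forall>k x. (deriv ^^ k) f differentiable (at x))
       \<and> (\<forall>k x. (deriv ^^ k) f x =
              (\<Sum>l. x ^ l * (fact (l + k) / fact l) * sig_inner \<gamma> \<sigma> a s t (l + k)))
       \<and> (\<forall>k x. x \<noteq> 0 \<longrightarrow>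
              \<bar>(deriv ^^ k) f x\<bar> \<le>
                sqrt (path_length \<gamma> a s) ^ k * sqrt (path_length \<sigma> a t) ^ k / sqrt \<bar>x\<bar> ^ k
                * besselI k (2 * sqrt (\<bar>x\<bar> * path_length \<gamma> a s * path_length \<sigma> a t)))"
proof -
  let ?L\<gamma> = "path_length \<gamma> a s" and ?L\<sigma> = "path_length \<sigma> a t"
  have "0 \<le> ?L\<gamma>" "0 \<le> ?L\<sigma>"
    using path_length_nonneg[OF assms(4)] path_length_nonneg[OF assms(5)] assms(6,7) by auto
  then have C: "0 \<le> ?L\<gamma> * ?L\<sigma>" by simp
  note series = power_series_factorial_sq_decay[OF abs_sig_inner_le[OF assms(1-7)] C, folded f_def]
  have "\<bar>(deriv ^^ k) f x\<bar> \<le> sqrt ?L\<gamma> ^ k * sqrt ?L\<sigma> ^ k / sqrt \<bar>x\<bar> ^ k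
      * besselI k (2 * sqrt (\<bar>x\<bar> * ?L\<gamma> * ?L\<sigma>))" if "x \<noteq> 0" for k x
  proof -
    have "\<bar>(deriv ^^ k) f x\<bar> \<le> (\<Sum>l. \<bar>x\<bar> ^ l * (?L\<gamma> * ?L\<sigma>) ^ (l + k) / (fact l * fact (l + k)))"
      by (rule series(3))
    also have "\<dots> = (sqrt (?L\<gamma> * ?L\<sigma>) / sqrt \<bar>x\<bar>) ^ k * besselI k (2 * sqrt (\<bar>x\<bar> * (?L\<gamma> * ?L\<sigma>)))"
      using that by (intro besselI_series C) simp
    also have "\<dots> = sqrt ?L\<gamma> ^ k * sqrt ?L\<sigma> ^ k / sqrt \<bar>x\<bar> ^ k
        * besselI k (2 * sqrt (\<bar>x\<bar> * ?L\<gamma> * ?L\<sigma>))"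
      by (simp add: real_sqrt_mult power_mult_distrib power_divide mult.assoc)
    finally show ?thesis .
  qed
  then show ?thesis using series(1,2) by blast
qed

end
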